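(* Let $X>0$ and let $w:[0,X]\to\mathbb{R}$ be a smooth function with $w''(x)\ge w(x)$ and $w(x)\ge0$ for all $x\in[0,X]$, and $w'(0)\ge0$. Let $p:[0,X]\to\mathbb{R}^+$ be a decreasing integrable function. Then \[\int_0^Xp(x)w(x)\,dx\le\Big(\frac{p(0)}{\cosh(X/2)}+p(X/2)\Big)\int_0^Xw(x)\,dx.\] *)

theory Defs
  imports "HOL-Analysis.Analysis"
begin

definition smooth_on_with :: "(real \<Rightarrow> real) \<Rightarrow> (nat \<Rightarrow> real \<Rightarrow> real) \<Rightarrow> real set \<Rightarrow> bool" where
  "smooth_on_with f D S \<longleftrightarrow>
     (\<forall>x\<in>S. D 0 x = f x) \<and>
     (\<forall>n. \<forall>x\<in>S. (D n has_real_derivative D (Suc n) x) (at x within S))"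

end

theory Submission
  imports Defs
begin

text \<open>Since \<open>w'' \<ge> w \<ge> 0\<close> and \<open>w'(0) \<ge> 0\<close>, the function \<open>w\<close> grows at least like the
  solution \<open>cosh\<close> of \<open>u'' = u\<close>: \<open>cosh h \<cdot> w(y) \<le> w(y + h)\<close>. Hence the mass of \<open>w\<close> on
  \<open>[0, X/2]\<close> is at most a fraction \<open>1 / cosh (X/2)\<close> of its total mass. Bounding the
  decreasing weight \<open>p\<close> by \<open>p(0)\<close> on the first half and by \<open>p(X/2)\<close> on the second
  half gives the inequality.\<close>

lemma DERIV_within_Icc_nonneg_imp_nondecreasing:
  fixes f f' :: "real \<Rightarrow> real"
  assumes "a \<le> c" "c \<le> d" "d \<le> b"
    and deriv: "\<And>x. x \<in> {a..b} \<Longrightarrow> (f has_real_derivative f' x) (at x within {a..b})"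
    and nonneg: "\<And>x. x \<in> {c..d} \<Longrightarrow> f' x \<ge> 0"
  shows "f c \<le> f d"
proof (rule DERIV_nonneg_imp_increasing_open[OF \<open>c \<le> d\<close>])
  have "continuous_on {a..b} f"
    unfolding continuous_on_eq_continuous_within using deriv DERIV_continuous by blast
  then show "continuous_on {c..d} f"
    by (rule continuous_on_subset) (use assms in auto)
next
  fix x assume "c < x" "x < d"
  then have "a < x" "x < b" using assms by auto
  then show "\<exists>y. DERIV f x :> y \<and> y \<ge> 0"
    using deriv[of x] nonneg[of x] \<open>c < x\<close> \<open>x < d\<close> at_within_Icc_at[of a x b] by force
qed

lemma deriv_nonneg_if_second_deriv_ge:
  fixes f f' f'' :: "real \<Rightarrow> real"
  assumes f': "\<And>x. x \<in> {a..b} \<Longrightarrow> (f' has_real_derivative f'' x) (at x within {a..b})"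
    and f''_ge: "\<And>x. x \<in> {a..b} \<Longrightarrow> f'' x \<ge> f x"
    and f_nonneg: "\<And>x. x \<in> {a..b} \<Longrightarrow> f x \<ge> 0"
    and "f' a \<ge> 0" "y \<in> {a..b}"
  shows "f' y \<ge> 0"
proof -
  have "f' a \<le> f' y"
    by (rule DERIV_within_Icc_nonneg_imp_nondecreasing[OF _ _ _ f', of a y])
      (use \<open>y \<in> {a..b}\<close> f''_ge f_nonneg in \<open>auto intro: order_trans\<close>)
  then show ?thesis using \<open>f' a \<ge> 0\<close> by linarith
qed

text \<open>Comparison with \<open>t \<mapsto> f(y) cosh (t - y)\<close>: the Wronskian-type quantity
  \<open>f' cosh (t - y) - f sinh (t - y)\<close> has derivative \<open>(f'' - f) cosh (t - y) \<ge> 0\<close>, so it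
  stays \<open>\<ge> f'(y) \<ge> 0\<close>; it is \<open>cosh\<^sup>2 (t - y)\<close> times the derivative of \<open>f / cosh (t - y)\<close>.\<close>

lemma cosh_mul_le_shift_if_second_deriv_ge:
  fixes f f' f'' :: "real \<Rightarrow> real"
  assumes f: "\<And>x. x \<in> {a..b} \<Longrightarrow> (f has_real_derivative f' x) (at x within {a..b})"
    and f': "\<And>x. x \<in> {a..b} \<Longrightarrow> (f' has_real_derivative f'' x) (at x within {a..b})"
    and f''_ge: "\<And>x. x \<in> {a..b} \<Longrightarrow> f'' x \<ge> f x"
    and f_nonneg: "\<And>x. x \<in> {a..b} \<Longrightarrow> f x \<ge> 0"
    and "f' a \<ge> 0" "a \<le> y" "0 \<le> h" "y + h \<le> b"
  shows "cosh h * f y \<le> f (y + h)"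
proof -
  define W where "W t = f' t * cosh (t - y) - f t * sinh (t - y)" for t
  have W_deriv: "(W has_real_derivative (f'' t - f t) * cosh (t - y)) (at t within {a..b})"
    if "t \<in> {a..b}" for t
    unfolding W_def
    by (auto intro!: derivative_eq_intros f[OF that] f'[OF that] simp: algebra_simps)
  have W_nonneg: "W t \<ge> 0" if "t \<in> {y..y + h}" for t
  proof -
    have "W y \<le> W t"
      by (rule DERIV_within_Icc_nonneg_imp_nondecreasing[OF _ _ _ W_deriv])
        (use that assms in \<open>auto intro: f''_ge\<close>)
    moreover have "W y \<ge> 0"
      using deriv_nonneg_if_second_deriv_ge[OF f' f''_ge f_nonneg] assms by (simp add: W_def)
    ultimately show ?thesis by linarith
  qed
  define Q where "Q t = f t / cosh (t - y)" for t
  have Q_deriv: "(Q has_real_derivative W t / (cosh (t - y))\<^sup>2) (at t within {a..b})"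
    if "t \<in> {a..b}" for t
  proof -
    have "cosh (t - y) \<noteq> 0" by (metis cosh_real_pos less_irrefl)
    then show ?thesis
      unfolding Q_def W_def by (auto intro!: derivative_eq_intros f[OF that] simp: power2_eq_square)
  qed
  have "Q y \<le> Q (y + h)"
    by (rule DERIV_within_Icc_nonneg_imp_nondecreasing[OF _ _ _ Q_deriv])
      (use assms W_nonneg in auto)
  then show ?thesis by (simp add: Q_def field_simps)
qed

lemma integral_mult_le_of_antimono:
  fixes p w :: "real \<Rightarrow> real"
  assumes "(\<lambda>x. p x * w x) integrable_on {a..b}" "w integrable_on {a..b}"
    and "\<And>x. x \<in> {a..b} \<Longrightarrow> p x \<le> p a"
    and "\<And>x. x \<in> {a..b} \<Longrightarrow> w x \<ge> 0"
  shows "integral {a..b} (\<lambda>x. p x * w x) \<le> p a * integral {a..b} w"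
proof -
  have "integral {a..b} (\<lambda>x. p x * w x) \<le> integral {a..b} (\<lambda>x. p a * w x)"
    using assms by (intro integral_le integrable_on_mult_right) (auto intro: mult_right_mono)
  then show ?thesis by simp
qed

lemma mult_integral_le_integral_shift:
  fixes w :: "real \<Rightarrow> real"
  assumes "w integrable_on {a..b}" "w integrable_on {a + h..b + h}"
    and "\<And>y. y \<in> {a..b} \<Longrightarrow> c * w y \<le> w (h + y)"
  shows "c * integral {a..b} w \<le> integral {a + h..b + h} w"
proof -
  have "integral {a..b} (\<lambda>y. c * w y) \<le> integral {a..b} (w \<circ> (+) h)"
  proof (rule integral_le)
    show "(\<lambda>y. c * w y) integrable_on {a..b}"
      using assms(1) by (rule integrable_on_mult_right)
    show "(w \<circ> (+) h) integrable_on {a..b}"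
      using assms(2) by (simp add: integrable_on_shift_Icc_real add.commute)
  qed (use assms(3) in simp)
  then show ?thesis by (simp add: integral_shift_Icc_real add.commute)
qed

lemma integral_mult_antimono_le_of_growth:
  fixes a b \<gamma> :: real and p w :: "real \<Rightarrow> real"
  defines "h \<equiv> (b - a) / 2"
  assumes "a \<le> b" "\<gamma> > 0"
    and pw_int: "(\<lambda>x. p x * w x) integrable_on {a..b}" and w_int: "w integrable_on {a..b}"
    and antimono: "\<And>x y. x \<in> {a..b} \<Longrightarrow> y \<in> {a..b} \<Longrightarrow> x \<le> y \<Longrightarrow> p y \<le> p x"
    and p_nonneg: "\<And>x. x \<in> {a..b} \<Longrightarrow> p x \<ge> 0"
    and w_nonneg: "\<And>x. x \<in> {a..b} \<Longrightarrow> w x \<ge> 0"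
    and growth: "\<And>y. y \<in> {a..a + h} \<Longrightarrow> \<gamma> * w y \<le> w (h + y)"
  shows "integral {a..b} (\<lambda>x. p x * w x) \<le> (p a / \<gamma> + p (a + h)) * integral {a..b} w"
proof -
  define A where "A = integral {a..a + h} w"
  define B where "B = integral {a + h..b} w"
  have h: "0 \<le> h" "a + h + h = b" using \<open>a \<le> b\<close> by (auto simp: h_def)
  have w_int_halves: "w integrable_on {a..a + h}" "w integrable_on {a + h..b}"
    using w_int h by (auto intro: integrable_subinterval_real)
  have pw_int_halves: "(\<lambda>x. p x * w x) integrable_on {a..a + h}"
    "(\<lambda>x. p x * w x) integrable_on {a + h..b}"
    using pw_int h by (auto intro: integrable_subinterval_real)
  have "\<gamma> * A \<le> B"
    using mult_integral_le_integral_shift[of w a "a + h" h \<gamma>] w_int_halves growth h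
    by (simp add: A_def B_def)
  moreover have "A \<ge> 0" using w_int_halves w_nonneg h by (auto simp: A_def intro: integral_nonneg)
  ultimately have A_le: "A \<le> (A + B) / \<gamma>" using \<open>\<gamma> > 0\<close> by (simp add: field_simps)
  have "integral {a..b} (\<lambda>x. p x * w x)
      = integral {a..a + h} (\<lambda>x. p x * w x) + integral {a + h..b} (\<lambda>x. p x * w x)"
    using Henstock_Kurzweil_Integration.integral_combine[OF _ _ pw_int] h by simp
  also have "\<dots> \<le> p a * A + p (a + h) * B"
    unfolding A_def B_def
    by (intro add_mono integral_mult_le_of_antimono pw_int_halves w_int_halves)
      (use h antimono w_nonneg in auto)
  also have "\<dots> \<le> p a * ((A + B) / \<gamma>) + p (a + h) * (A + B)"
    using A_le \<open>A \<ge> 0\<close> p_nonneg h by (intro add_mono mult_left_mono) auto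
  also have "A + B = integral {a..b} w"
    using Henstock_Kurzweil_Integration.integral_combine[OF _ _ w_int] h by (simp add: A_def B_def)
  finally show ?thesis by (simp add: algebra_simps)
qed

theorem proposition5p4:
  fixes X :: real and w p :: "real \<Rightarrow> real" and D :: "nat \<Rightarrow> real \<Rightarrow> real"
  assumes "X > 0"
    and "smooth_on_with w D {0..X}"
    and "\<forall>x\<in>{0..X}. D 2 x \<ge> w x"
    and "\<forall>x\<in>{0..X}. w x \<ge> 0"
    and "D 1 0 \<ge> 0"
    and "\<forall>x\<in>{0..X}. p x > 0"
    and "\<forall>x\<in>{0..X}. \<forall>y\<in>{0..X}. x \<le> y \<longrightarrow> p y \<le> p x"
    and "p integrable_on {0..X}"
  shows "integral {0..X} (\<lambda>x. p x * w x)
           \<le> (p 0 / cosh (X / 2) + p (X / 2)) * integral {0..X} w"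
proof -
  have w_eq: "D 0 x = w x" and deriv: "(D n has_real_derivative D (Suc n) x) (at x within {0..X})"
    if "x \<in> {0..X}" for x n
    using assms(2) that by (auto simp: smooth_on_with_def)
  have D0_deriv: "(D 0 has_real_derivative D 1 x) (at x within {0..X})"
    and D1_deriv: "(D 1 has_real_derivative D 2 x) (at x within {0..X})" if "x \<in> {0..X}" for x
    using deriv[OF that, of 0] deriv[OF that, of 1] by (simp_all add: numeral_2_eq_2)
  have "continuous_on {0..X} (D 0)"
    unfolding continuous_on_eq_continuous_within using D0_deriv DERIV_continuous by blast
  then have w_int: "w integrable_on {0..X}"
    using integrable_continuous_interval integrable_eq w_eq by blast
  have growth: "cosh (X / 2) * w y \<le> w (X / 2 + y)" if "y \<in> {0..X / 2}" for y
    using cosh_mul_le_shift_if_second_deriv_ge[where f = "D 0" and f' = "D 1" and f'' = "D 2"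
        and y = y and h = "X / 2", OF D0_deriv D1_deriv] that assms(1,3-5)
    by (simp add: numeral_2_eq_2 w_eq add.commute)
  show ?thesis
  proof (cases "(\<lambda>x. p x * w x) integrable_on {0..X}")
    case True
    then show ?thesis
      using integral_mult_antimono_le_of_growth[of 0 X "cosh (X / 2)" p w] w_int growth assms
      by (auto simp: less_imp_le)
  next
    case False
    \<comment> \<open>The integral of a non-integrable function is \<open>0\<close>.\<close>
    have "p 0 > 0" "p (X / 2) > 0" using assms(1,6) by auto
    then have "p 0 / cosh (X / 2) + p (X / 2) \<ge> 0" by simp
    moreover have "integral {0..X} w \<ge> 0" using w_int assms(4) by (auto intro: integral_nonneg)
    ultimately show ?thesis using False by (simp add: not_integrable_integral)
  qed
qed

end
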